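(* Let $R$ be a commutative ring and $M$ an $R$-module, and let $\mathbf F(M)$ be the set of $R$-submodules of $M$ with its Zariski topology. Then: (1) the set $\mathbf f(M)$ of finitely generated submodules of $M$ is dense in $\mathbf F(M)$ with respect to the constructible topology; (2) $\mathbf f(M)$, with the subspace topology induced by the Zariski topology, is a spectral space if and only if $M$ is a Noetherian $R$-module.
   Context: The Zariski topology on $\mathbf F(M)$ is the topology with basis of open sets $\mathcal B(x_1,\ldots,x_n):=\{N\in\mathbf F(M)\mid x_1,\ldots,x_n\in N\}$, $x_1,\ldots,x_n\in M$; with it $\mathbf F(M)$ is a spectral space (a space homeomorphic to the prime spectrum of a commutative ring). The constructible topology on a spectral space is the coarsest topology in which all open quasi-compact subsets are clopen. *)

theory Defs
  imports "HOL-Analysis.Analysis" "HOL-Algebra.Module"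
begin

definition submods :: "('a, 'c) ring_scheme \<Rightarrow> ('a, 'b, 'd) module_scheme \<Rightarrow> 'b set set" where
  "submods R M = {N. submodule N R M}"

definition gen_submod :: "('a, 'c) ring_scheme \<Rightarrow> ('a, 'b, 'd) module_scheme \<Rightarrow> 'b set \<Rightarrow> 'b set" where
  "gen_submod R M X = \<Inter>{P. submodule P R M \<and> X \<subseteq> P}"

definition fg_submods :: "('a, 'c) ring_scheme \<Rightarrow> ('a, 'b, 'd) module_scheme \<Rightarrow> 'b set set" where
  "fg_submods R M = {N. submodule N R M \<and>
      (\<exists>X. finite X \<and> X \<subseteq> carrier M \<and> N = gen_submod R M X)}"

definition zariski_basic :: "('a, 'c) ring_scheme \<Rightarrow> ('a, 'b, 'd) module_scheme \<Rightarrow> 'b set \<Rightarrow> 'b set set" where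
  "zariski_basic R M X = {N \<in> submods R M. X \<subseteq> N}"

definition zariski_submods :: "('a, 'c) ring_scheme \<Rightarrow> ('a, 'b, 'd) module_scheme \<Rightarrow> 'b set topology" where
  "zariski_submods R M =
     topology_generated_by {zariski_basic R M X | X. finite X \<and> X \<subseteq> carrier M}"

definition constructible_topology :: "'a topology \<Rightarrow> 'a topology" where
  "constructible_topology X =
     topology_generated_by
       ({U. openin X U \<and> compactin X U} \<union> {topspace X - U | U. openin X U \<and> compactin X U})"

definition irreducible_in :: "'a topology \<Rightarrow> 'a set \<Rightarrow> bool" where
  "irreducible_in X Z \<longleftrightarrow> Z \<noteq> {} \<and> Z \<subseteq> topspace X \<and>
     (\<forall>A B. closedin X A \<and> closedin X B \<and> Z \<subseteq> A \<union> B \<longrightarrow> Z \<subseteq> A \<or> Z \<subseteq> B)"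

text \<open>Spectral space, via Hochster's intrinsic characterization.\<close>
definition spectral_space :: "'a topology \<Rightarrow> bool" where
  "spectral_space X \<longleftrightarrow>
     t0_space X \<and> compact_space X \<and>
     (\<forall>U V. openin X U \<and> compactin X U \<and> openin X V \<and> compactin X V \<longrightarrow> compactin X (U \<inter> V)) \<and>
     (\<forall>W. openin X W \<longrightarrow> (\<exists>\<C>. (\<forall>C\<in>\<C>. openin X C \<and> compactin X C) \<and> W = \<Union>\<C>)) \<and>
     (\<forall>Z. closedin X Z \<and> irreducible_in X Z \<longrightarrow> (\<exists>!x. x \<in> topspace X \<and> X closure_of {x} = Z))"

definition noetherian_module :: "('a, 'c) ring_scheme \<Rightarrow> ('a, 'b, 'd) module_scheme \<Rightarrow> bool" where
  "noetherian_module R M \<longleftrightarrow>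
     (\<forall>C :: nat \<Rightarrow> 'b set. (\<forall>n. submodule (C n) R M) \<and> (\<forall>n. C n \<subseteq> C (Suc n)) \<longrightarrow>
        (\<exists>k. \<forall>n\<ge>k. C n = C k))"

end

theory Submission
  imports Defs
begin

text \<open>
  Zariski-open sets are upward closed, and each point N of an open set U has a basic
  neighbourhood B(X) \<subseteq> U with X \<subseteq> N finite. Hence every constructible-open neighbourhood
  of N contains a whole interval {P | X \<subseteq> P \<subseteq> N} with X \<subseteq> N finite, and the finitely
  generated submodule \<langle>X\<rangle> lies in it.

  F(M) itself is spectral: B(X) has the least element \<langle>X\<rangle>, hence is quasi-compact; and
  irreducibility of a closed set Z puts every finite subset of \<Union>Z inside a single member
  of Z, so \<Union>Z is a submodule, lies in Z, and is the generic point of Z. Thus if M is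
  Noetherian, f(M) = F(M) is spectral. Conversely, if f(M) is spectral and N is a submodule,
  the finitely generated submodules of N form a directed, hence irreducible, closed subset
  of f(M); its generic point G satisfies G \<subseteq> N \<subseteq> G. So every submodule is finitely
  generated, which forces the ascending chain condition.
\<close>

section \<open>Finitely generated submodules and Noetherian modules\<close>

lemma submods_subset_carrier: "P \<in> submods R M \<Longrightarrow> P \<subseteq> carrier M"
  unfolding submods_def using submodule.axioms(1) subgroup.subset by force

lemma (in module) submodule_Inter:
  assumes "\<P> \<noteq> {}" and sub: "\<And>P. P \<in> \<P> \<Longrightarrow> submodule P R M"
  shows "submodule (\<Inter>\<P>) R M"
proof (rule submoduleI)
  show "\<Inter>\<P> \<subseteq> carrier M" using assms submoduleE(1) by blast
  show "\<zero>\<^bsub>M\<^esub> \<in> \<Inter>\<P>" using sub subgroup.one_closed[OF submodule.axioms(1)] by fastforce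
  show "\<ominus>\<^bsub>M\<^esub> a \<in> \<Inter>\<P>" if "a \<in> \<Inter>\<P>" for a using that sub submoduleE(3) by blast
  show "a \<oplus>\<^bsub>M\<^esub> b \<in> \<Inter>\<P>" if "a \<in> \<Inter>\<P>" "b \<in> \<Inter>\<P>" for a b
    using that sub submoduleE(5) by blast
  show "a \<odot>\<^bsub>M\<^esub> x \<in> \<Inter>\<P>" if "a \<in> carrier R" "x \<in> \<Inter>\<P>" for a x
    using that sub submoduleE(4) by blast
qed

lemma (in module) submodule_Union:
  assumes "\<P> \<noteq> {}" and sub: "\<And>P. P \<in> \<P> \<Longrightarrow> submodule P R M"
    and bounded: "\<And>a b. a \<in> \<Union>\<P> \<Longrightarrow> b \<in> \<Union>\<P> \<Longrightarrow> \<exists>P\<in>\<P>. a \<in> P \<and> b \<in> P"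
  shows "submodule (\<Union>\<P>) R M"
proof (rule submoduleI)
  show "\<Union>\<P> \<subseteq> carrier M" using sub submoduleE(1) by blast
  show "\<zero>\<^bsub>M\<^esub> \<in> \<Union>\<P>"
    using assms(1) sub subgroup.one_closed[OF submodule.axioms(1)] by fastforce
  show "\<ominus>\<^bsub>M\<^esub> a \<in> \<Union>\<P>" if "a \<in> \<Union>\<P>" for a using that sub submoduleE(3) by blast
  show "a \<oplus>\<^bsub>M\<^esub> b \<in> \<Union>\<P>" if "a \<in> \<Union>\<P>" "b \<in> \<Union>\<P>" for a b
    using bounded[OF that] sub submoduleE(5) by blast
  show "a \<odot>\<^bsub>M\<^esub> x \<in> \<Union>\<P>" if "a \<in> carrier R" "x \<in> \<Union>\<P>" for a x
    using that sub submoduleE(4) by blast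
qed

lemma (in module) submodule_gen_submod: "X \<subseteq> carrier M \<Longrightarrow> submodule (gen_submod R M X) R M"
  unfolding gen_submod_def by (rule submodule_Inter) (auto intro: carrier_is_submodule)

lemma gen_submod_incl: "X \<subseteq> gen_submod R M X"
  unfolding gen_submod_def by blast

lemma gen_submod_least: "submodule P R M \<Longrightarrow> X \<subseteq> P \<Longrightarrow> gen_submod R M X \<subseteq> P"
  unfolding gen_submod_def by blast

lemma gen_submod_mono: "X \<subseteq> Y \<Longrightarrow> gen_submod R M X \<subseteq> gen_submod R M Y"
  unfolding gen_submod_def by blast

lemma (in module) gen_submod_in_fg_submods:
  "finite X \<Longrightarrow> X \<subseteq> carrier M \<Longrightarrow> gen_submod R M X \<in> fg_submods R M"
  unfolding fg_submods_def using submodule_gen_submod by blast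

lemma fg_submods_subset_submods: "fg_submods R M \<subseteq> submods R M"
  unfolding fg_submods_def submods_def by blast

lemma fg_submodsE:
  assumes "P \<in> fg_submods R M"
  obtains X where "finite X" "X \<subseteq> carrier M" "P = gen_submod R M X"
  using assms unfolding fg_submods_def by blast

lemma noetherian_module_maximal:
  assumes noeth: "noetherian_module R M" and "\<Z> \<noteq> {}" and "\<Z> \<subseteq> submods R M"
  obtains P where "P \<in> \<Z>" "\<And>Q. Q \<in> \<Z> \<Longrightarrow> P \<subseteq> Q \<Longrightarrow> Q = P"
proof -
  have "\<exists>P\<in>\<Z>. \<forall>Q\<in>\<Z>. P \<subseteq> Q \<longrightarrow> Q = P"
  proof (rule ccontr)
    assume "\<not> ?thesis"
    then have "\<forall>P\<in>\<Z>. \<exists>Q. Q \<in> \<Z> \<and> P \<subset> Q" by blast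
    then obtain next_sub where next_sub: "\<forall>P\<in>\<Z>. next_sub P \<in> \<Z> \<and> P \<subset> next_sub P"
      by (rule bchoice [THEN exE])
    obtain P0 where "P0 \<in> \<Z>" using assms(2) by blast
    define C where "C n = (next_sub ^^ n) P0" for n
    have C_in: "C n \<in> \<Z>" for n
      by (induction n) (simp_all add: C_def \<open>P0 \<in> \<Z>\<close> next_sub)
    have C_strict: "C n \<subset> C (Suc n)" for n
      using next_sub C_in[of n] by (simp add: C_def)
    have "\<forall>n. submodule (C n) R M" using C_in assms(3) by (auto simp: submods_def)
    moreover have "\<forall>n. C n \<subseteq> C (Suc n)" using C_strict by (simp add: psubset_imp_subset)
    ultimately have "\<exists>k. \<forall>n\<ge>k. C n = C k"
      by (rule noeth[unfolded noetherian_module_def, THEN spec[of _ C], THEN mp, OF conjI])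
    then obtain k where "\<forall>n\<ge>k. C n = C k" ..
    then have "C (Suc k) = C k" using le_SucI by blast
    then show False using C_strict[of k] by simp
  qed
  then show thesis using that by blast
qed

lemma (in module) noetherian_module_imp_fg:
  assumes noeth: "noetherian_module R M" and N: "submodule N R M"
  shows "N \<in> fg_submods R M"
proof -
  define \<Z> where "\<Z> = {gen_submod R M X | X. finite X \<and> X \<subseteq> N}"
  have N_carrier: "N \<subseteq> carrier M" using N by (rule submoduleE(1))
  obtain P where "P \<in> \<Z>" and maximal: "\<And>Q. Q \<in> \<Z> \<Longrightarrow> P \<subseteq> Q \<Longrightarrow> Q = P"
  proof (rule noetherian_module_maximal[OF noeth])
    show "\<Z> \<noteq> {}" unfolding \<Z>_def by blast
    show "\<Z> \<subseteq> submods R M"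
      unfolding \<Z>_def submods_def using N_carrier by (auto intro!: submodule_gen_submod)
  qed (rule that)
  then obtain X where X: "finite X" "X \<subseteq> N" "P = gen_submod R M X" unfolding \<Z>_def by blast
  have "N \<subseteq> P"
  proof
    fix x assume "x \<in> N"
    then have "gen_submod R M (insert x X) \<in> \<Z>" using X unfolding \<Z>_def by blast
    moreover have "P \<subseteq> gen_submod R M (insert x X)"
      unfolding X(3) by (rule gen_submod_mono) blast
    ultimately have "gen_submod R M (insert x X) = P" by (rule maximal)
    then show "x \<in> P" using gen_submod_incl[of "insert x X" R M] by simp
  qed
  moreover have "P \<subseteq> N" unfolding X(3) using N X(2) by (rule gen_submod_least)
  ultimately have "N = gen_submod R M X" unfolding X(3) by (rule subset_antisym)
  then show ?thesis using X(1,2) N_carrier by (simp add: gen_submod_in_fg_submods)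
qed

lemma mono_finite_subset_Union:
  fixes C :: "nat \<Rightarrow> 'a set"
  assumes "mono C" and "finite X" and "X \<subseteq> \<Union>(range C)"
  obtains k where "X \<subseteq> C k"
proof -
  have chain: "subset.chain UNIV (range C)"
    unfolding subset_chain_def
  proof (intro conjI ballI subset_UNIV)
    fix A B assume "A \<in> range C" "B \<in> range C"
    then obtain i j where "A = C i" "B = C j" by blast
    consider "i \<le> j" | "j \<le> i" by linarith
    then show "A \<subseteq> B \<or> B \<subseteq> A"
      by cases (simp_all add: \<open>A = C i\<close> \<open>B = C j\<close> monoD[OF assms(1)])
  qed
  obtain B where "B \<in> range C" "X \<subseteq> B"
    by (rule finite_subset_Union_chain[OF assms(2,3) _ chain]) simp
  then show thesis using that by blast
qed

lemma (in module) noetherian_module_iff_fg_submods: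
  "noetherian_module R M \<longleftrightarrow> fg_submods R M = submods R M"
proof
  assume "noetherian_module R M"
  then show "fg_submods R M = submods R M"
    using noetherian_module_imp_fg fg_submods_subset_submods unfolding submods_def by blast
next
  assume fg: "fg_submods R M = submods R M"
  show "noetherian_module R M"
    unfolding noetherian_module_def
  proof (intro allI impI)
    fix C assume C: "(\<forall>n. submodule (C n) R M) \<and> (\<forall>n. C n \<subseteq> C (Suc n))"
    then have "mono C" by (simp add: mono_iff_le_Suc)
    have "submodule (\<Union>(range C)) R M"
    proof (rule submodule_Union)
      fix a b assume "a \<in> \<Union>(range C)" "b \<in> \<Union>(range C)"
      then obtain k where "{a, b} \<subseteq> C k"
        using mono_finite_subset_Union[OF \<open>mono C\<close>, of "{a, b}"] by auto
      then show "\<exists>P\<in>range C. a \<in> P \<and> b \<in> P" by blast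
    qed (use C in auto)
    then have "\<Union>(range C) \<in> fg_submods R M" using fg by (simp add: submods_def)
    then obtain X where X: "finite X" "X \<subseteq> carrier M" "\<Union>(range C) = gen_submod R M X"
      by (rule fg_submodsE)
    then have "X \<subseteq> \<Union>(range C)" by (simp add: gen_submod_incl)
    then obtain k where "X \<subseteq> C k" using mono_finite_subset_Union[OF \<open>mono C\<close> X(1)] by blast
    then have "\<Union>(range C) \<subseteq> C k" unfolding X(3) using C by (simp add: gen_submod_least)
    then have "C n = C k" if "n \<ge> k" for n using monoD[OF \<open>mono C\<close> that] by blast
    then show "\<exists>k. \<forall>n\<ge>k. C n = C k" by blast
  qed
qed

section \<open>The Zariski topology on submodules\<close>

lemma zariski_basic_empty: "zariski_basic R M {} = submods R M"
  unfolding zariski_basic_def by blast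

lemma topspace_zariski_submods: "topspace (zariski_submods R M) = submods R M"
proof -
  have "zariski_basic R M {} \<in> {zariski_basic R M X | X. finite X \<and> X \<subseteq> carrier M}" by blast
  then show ?thesis
    unfolding zariski_submods_def topology_generated_by_topspace zariski_basic_empty
    by (auto simp: zariski_basic_def)
qed

lemma openin_zariski_basic:
  "finite X \<Longrightarrow> X \<subseteq> carrier M \<Longrightarrow> openin (zariski_submods R M) (zariski_basic R M X)"
  unfolding zariski_submods_def by (rule topology_generated_by_Basis) blast

lemma zariski_basic_Un: "zariski_basic R M (X \<union> Y) = zariski_basic R M X \<inter> zariski_basic R M Y"
  unfolding zariski_basic_def by blast

lemma openin_zariski_submodsE:
  assumes "openin (zariski_submods R M) U" and "N \<in> U"
  obtains X where "finite X" "X \<subseteq> N" "zariski_basic R M X \<subseteq> U"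
proof -
  have "generate_topology_on {zariski_basic R M X | X. finite X \<and> X \<subseteq> carrier M} U"
    using assms(1) unfolding zariski_submods_def openin_topology_generated_by_iff .
  then have "\<exists>X. finite X \<and> X \<subseteq> N \<and> zariski_basic R M X \<subseteq> U"
    using assms(2)
  proof (induction arbitrary: N rule: generate_topology_on.induct)
    case (Int U V)
    obtain X where X: "finite X" "X \<subseteq> N" "zariski_basic R M X \<subseteq> U"
      using Int.IH(1)[of N] Int.prems by blast
    obtain Y where Y: "finite Y" "Y \<subseteq> N" "zariski_basic R M Y \<subseteq> V"
      using Int.IH(2)[of N] Int.prems by blast
    show ?case
      using X Y by (intro exI[of _ "X \<union> Y"]) (auto simp: zariski_basic_Un)
  next
    case (UN \<K>)
    then obtain K where K: "K \<in> \<K>" "N \<in> K" by blast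
    then obtain X where "finite X" "X \<subseteq> N" "zariski_basic R M X \<subseteq> K"
      using UN.IH[OF K] by blast
    then show ?case using K(1) by (intro exI[of _ X]) auto
  next
    case (Basis U)
    then obtain X where "finite X" "U = zariski_basic R M X" by blast
    then show ?case
      using Basis.prems by (intro exI[of _ X]) (simp add: zariski_basic_def)
  qed simp
  then show thesis using that by blast
qed

lemma openin_zariski_submods_upward:
  assumes "openin (zariski_submods R M) U" "N \<in> U" "P \<in> submods R M" "N \<subseteq> P"
  shows "P \<in> U"
proof -
  obtain X where "X \<subseteq> N" "zariski_basic R M X \<subseteq> U"
    using assms(1,2) by (rule openin_zariski_submodsE)
  with assms(3,4) show ?thesis unfolding zariski_basic_def by blast
qed

lemma closedin_zariski_submods_downward:
  assumes "closedin (zariski_submods R M) A" "P \<in> A" "Q \<in> submods R M" "Q \<subseteq> P"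
  shows "Q \<in> A"
proof (rule ccontr)
  assume "Q \<notin> A"
  have "openin (zariski_submods R M) (submods R M - A)"
    using assms(1) by (simp add: closedin_def topspace_zariski_submods)
  moreover have "P \<in> submods R M"
    using closedin_subset[OF assms(1)] assms(2) by (auto simp: topspace_zariski_submods)
  ultimately have "P \<in> submods R M - A"
    using openin_zariski_submods_upward assms(3,4) \<open>Q \<notin> A\<close> by blast
  with assms(2) show False by blast
qed

lemma closure_of_zariski_submods_singleton:
  assumes "Q \<in> submods R M"
  shows "zariski_submods R M closure_of {Q} = {P \<in> submods R M. P \<subseteq> Q}"
proof (intro equalityI subsetI)
  fix P assume P: "P \<in> zariski_submods R M closure_of {Q}"
  then have "P \<in> submods R M"
    using closure_of_subset_topspace by (fastforce simp: topspace_zariski_submods)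
  moreover have "x \<in> Q" if "x \<in> P" for x
  proof -
    have "openin (zariski_submods R M) (zariski_basic R M {x})"
      using that submods_subset_carrier[OF \<open>P \<in> submods R M\<close>] by (intro openin_zariski_basic) auto
    moreover have "P \<in> zariski_basic R M {x}"
      using \<open>P \<in> submods R M\<close> that by (simp add: zariski_basic_def)
    ultimately have "Q \<in> zariski_basic R M {x}" using P by (auto simp: in_closure_of)
    then show ?thesis by (simp add: zariski_basic_def)
  qed
  ultimately show "P \<in> {P \<in> submods R M. P \<subseteq> Q}" by blast
next
  fix P assume "P \<in> {P \<in> submods R M. P \<subseteq> Q}"
  then show "P \<in> zariski_submods R M closure_of {Q}"
    using openin_zariski_submods_upward assms
    by (auto simp: in_closure_of topspace_zariski_submods)
qed

lemma t0_space_zariski_submods: "t0_space (zariski_submods R M)"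
  unfolding t0_space_closure_of_sing topspace_zariski_submods
  by (auto simp: closure_of_zariski_submods_singleton)

lemma (in module) compactin_zariski_basic:
  assumes "finite X" and "X \<subseteq> carrier M"
  shows "compactin (zariski_submods R M) (zariski_basic R M X)"
  unfolding compactin_def
proof (intro conjI allI impI)
  show "zariski_basic R M X \<subseteq> topspace (zariski_submods R M)"
    by (auto simp: topspace_zariski_submods zariski_basic_def)
  fix \<U> assume \<U>: "(\<forall>U\<in>\<U>. openin (zariski_submods R M) U) \<and> zariski_basic R M X \<subseteq> \<Union>\<U>"
  have "gen_submod R M X \<in> zariski_basic R M X"
    using submodule_gen_submod[OF assms(2)] gen_submod_incl[of X R M]
    by (simp add: zariski_basic_def submods_def)
  then obtain U where U: "U \<in> \<U>" "gen_submod R M X \<in> U" using \<U> by blast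
  have "zariski_basic R M X \<subseteq> U"
  proof
    fix P assume P: "P \<in> zariski_basic R M X"
    then have "P \<in> submods R M" "gen_submod R M X \<subseteq> P"
      by (simp_all add: zariski_basic_def submods_def gen_submod_least)
    then show "P \<in> U" using \<U> U openin_zariski_submods_upward by blast
  qed
  with U(1) show "\<exists>\<F>. finite \<F> \<and> \<F> \<subseteq> \<U> \<and> zariski_basic R M X \<subseteq> \<Union>\<F>"
    by (intro exI[of _ "{U}"]) auto
qed

lemma openin_zariski_submods_eq_Union_basic:
  assumes "openin (zariski_submods R M) W"
  shows "W = \<Union>(zariski_basic R M ` {X. finite X \<and> X \<subseteq> carrier M \<and> zariski_basic R M X \<subseteq> W})"
    (is "W = \<Union>(zariski_basic R M ` ?\<A>)")
proof (rule subset_antisym)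
  show "W \<subseteq> \<Union>(zariski_basic R M ` ?\<A>)"
  proof
    fix N assume "N \<in> W"
    with assms obtain X where X: "finite X" "X \<subseteq> N" "zariski_basic R M X \<subseteq> W"
      by (rule openin_zariski_submodsE)
    have "N \<in> submods R M"
      using openin_subset[OF assms] \<open>N \<in> W\<close> by (auto simp: topspace_zariski_submods)
    then have "X \<in> ?\<A>" "N \<in> zariski_basic R M X"
      using X submods_subset_carrier[of N R M] by (auto simp: zariski_basic_def)
    then show "N \<in> \<Union>(zariski_basic R M ` ?\<A>)" by blast
  qed
  show "\<Union>(zariski_basic R M ` ?\<A>) \<subseteq> W" by blast
qed

lemma compact_openin_zariski_submodsE:
  assumes "openin (zariski_submods R M) U" and "compactin (zariski_submods R M) U"
  obtains \<X> where "finite \<X>" "\<forall>X\<in>\<X>. finite X \<and> X \<subseteq> carrier M"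
    "U = \<Union>(zariski_basic R M ` \<X>)"
proof -
  define \<A> where "\<A> = {X. finite X \<and> X \<subseteq> carrier M \<and> zariski_basic R M X \<subseteq> U}"
  have "openin (zariski_submods R M) V" if "V \<in> zariski_basic R M ` \<A>" for V
    using that by (auto simp: \<A>_def intro: openin_zariski_basic)
  moreover have "U \<subseteq> \<Union>(zariski_basic R M ` \<A>)"
    using openin_zariski_submods_eq_Union_basic[OF assms(1)] unfolding \<A>_def by blast
  ultimately have "\<exists>\<F>. finite \<F> \<and> \<F> \<subseteq> zariski_basic R M ` \<A> \<and> U \<subseteq> \<Union>\<F>"
    by (rule compactinD[OF assms(2)])
  then obtain \<F> where "finite \<F>" "\<F> \<subseteq> zariski_basic R M ` \<A>" "U \<subseteq> \<Union>\<F>"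
    by blast
  then obtain \<X> where \<X>: "\<X> \<subseteq> \<A>" "finite \<X>" "\<F> = zariski_basic R M ` \<X>"
    by (meson finite_subset_image)
  show thesis
  proof (rule that)
    show "finite \<X>" by (fact \<X>(2))
    show "\<forall>X\<in>\<X>. finite X \<and> X \<subseteq> carrier M" using \<X>(1) by (auto simp: \<A>_def)
    show "U = \<Union>(zariski_basic R M ` \<X>)"
    proof (rule subset_antisym)
      show "U \<subseteq> \<Union>(zariski_basic R M ` \<X>)" using \<open>U \<subseteq> \<Union>\<F>\<close> by (simp add: \<X>(3))
      show "\<Union>(zariski_basic R M ` \<X>) \<subseteq> U" using \<X>(1) by (auto simp: \<A>_def)
    qed
  qed
qed

lemma (in module) compactin_Int_zariski_submods:
  assumes "openin (zariski_submods R M) U" "compactin (zariski_submods R M) U"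
    and "openin (zariski_submods R M) V" "compactin (zariski_submods R M) V"
  shows "compactin (zariski_submods R M) (U \<inter> V)"
proof -
  obtain \<X> where \<X>: "finite \<X>" "\<forall>X\<in>\<X>. finite X \<and> X \<subseteq> carrier M"
    "U = \<Union>(zariski_basic R M ` \<X>)"
    using assms(1,2) by (rule compact_openin_zariski_submodsE)
  obtain \<Y> where \<Y>: "finite \<Y>" "\<forall>Y\<in>\<Y>. finite Y \<and> Y \<subseteq> carrier M"
    "V = \<Union>(zariski_basic R M ` \<Y>)"
    using assms(3,4) by (rule compact_openin_zariski_submodsE)
  have "U \<inter> V = \<Union>((\<lambda>(X, Y). zariski_basic R M (X \<union> Y)) ` (\<X> \<times> \<Y>))"
    unfolding \<X>(3) \<Y>(3) zariski_basic_Un by auto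
  also have "compactin (zariski_submods R M) \<dots>"
  proof (rule compactin_Union)
    show "finite ((\<lambda>(X, Y). zariski_basic R M (X \<union> Y)) ` (\<X> \<times> \<Y>))"
      using \<X>(1) \<Y>(1) by simp
    fix S assume "S \<in> (\<lambda>(X, Y). zariski_basic R M (X \<union> Y)) ` (\<X> \<times> \<Y>)"
    then obtain X Y where "X \<in> \<X>" "Y \<in> \<Y>" "S = zariski_basic R M (X \<union> Y)" by blast
    then show "compactin (zariski_submods R M) S"
      using \<X>(2) \<Y>(2) by (simp add: compactin_zariski_basic)
  qed
  finally show ?thesis .
qed

lemma irreducible_in_Int_openin:
  assumes "irreducible_in X Z" "openin X U" "openin X V" "Z \<inter> U \<noteq> {}" "Z \<inter> V \<noteq> {}"
  shows "Z \<inter> U \<inter> V \<noteq> {}"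
proof
  assume "Z \<inter> U \<inter> V = {}"
  then have "Z \<subseteq> (topspace X - U) \<union> (topspace X - V)"
    using assms(1) by (auto simp: irreducible_in_def)
  moreover have "closedin X (topspace X - U)" "closedin X (topspace X - V)"
    using assms(2,3) by auto
  ultimately have "Z \<subseteq> topspace X - U \<or> Z \<subseteq> topspace X - V"
    using assms(1) unfolding irreducible_in_def by blast
  with assms(4,5) show False by blast
qed

lemma irreducible_in_zariski_submods_finite_subset:
  assumes irr: "irreducible_in (zariski_submods R M) \<Z>" and "finite X" "X \<subseteq> \<Union>\<Z>"
  shows "\<exists>S\<in>\<Z>. X \<subseteq> S"
  using assms(2,3)
proof (induction X rule: finite_induct)
  case empty
  then show ?case using irr by (auto simp: irreducible_in_def)
next
  case (insert x X)
  have \<Z>_sub: "\<Z> \<subseteq> submods R M"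
    using irr by (simp add: irreducible_in_def topspace_zariski_submods)
  then have carrier: "\<Union>\<Z> \<subseteq> carrier M" using submods_subset_carrier by blast
  from insert obtain S where S: "S \<in> \<Z>" "X \<subseteq> S" by blast
  from insert.prems obtain T where T: "T \<in> \<Z>" "x \<in> T" by blast
  have "\<Z> \<inter> zariski_basic R M X \<inter> zariski_basic R M {x} \<noteq> {}"
  proof (rule irreducible_in_Int_openin[OF irr])
    show "openin (zariski_submods R M) (zariski_basic R M X)"
      using insert carrier by (intro openin_zariski_basic) auto
    show "openin (zariski_submods R M) (zariski_basic R M {x})"
      using insert carrier by (intro openin_zariski_basic) auto
    show "\<Z> \<inter> zariski_basic R M X \<noteq> {}"
      using S \<Z>_sub by (auto simp: zariski_basic_def)
    show "\<Z> \<inter> zariski_basic R M {x} \<noteq> {}"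
      using T \<Z>_sub by (auto simp: zariski_basic_def)
  qed
  then show ?case by (auto simp: zariski_basic_def)
qed

lemma (in module) zariski_submods_generic_point:
  assumes "closedin (zariski_submods R M) \<Z>" and irr: "irreducible_in (zariski_submods R M) \<Z>"
  shows "\<Union>\<Z> \<in> submods R M" and "zariski_submods R M closure_of {\<Union>\<Z>} = \<Z>"
proof -
  have \<Z>_sub: "\<Z> \<subseteq> submods R M"
    using irr by (simp add: irreducible_in_def topspace_zariski_submods)
  have "submodule (\<Union>\<Z>) R M"
  proof (rule submodule_Union)
    show "\<Z> \<noteq> {}" using irr by (simp add: irreducible_in_def)
    show "submodule P R M" if "P \<in> \<Z>" for P using that \<Z>_sub by (auto simp: submods_def)
    fix a b assume "a \<in> \<Union>\<Z>" "b \<in> \<Union>\<Z>"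
    then show "\<exists>P\<in>\<Z>. a \<in> P \<and> b \<in> P"
      using irreducible_in_zariski_submods_finite_subset[OF irr, of "{a, b}"] by auto
  qed
  then show generic: "\<Union>\<Z> \<in> submods R M" by (simp add: submods_def)
  have "\<Union>\<Z> \<in> \<Z>"
  proof (rule ccontr)
    assume "\<Union>\<Z> \<notin> \<Z>"
    have "openin (zariski_submods R M) (submods R M - \<Z>)"
      using assms(1) by (simp add: closedin_def topspace_zariski_submods)
    moreover have "\<Union>\<Z> \<in> submods R M - \<Z>" using generic \<open>\<Union>\<Z> \<notin> \<Z>\<close> by blast
    ultimately obtain X where X: "finite X" "X \<subseteq> \<Union>\<Z>" "zariski_basic R M X \<subseteq> submods R M - \<Z>"
      by (rule openin_zariski_submodsE)
    then obtain S where "S \<in> \<Z>" "X \<subseteq> S"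
      using irreducible_in_zariski_submods_finite_subset[OF irr] by blast
    then have "S \<in> zariski_basic R M X" using \<Z>_sub by (auto simp: zariski_basic_def)
    with X(3) \<open>S \<in> \<Z>\<close> show False by blast
  qed
  show "zariski_submods R M closure_of {\<Union>\<Z>} = \<Z>"
  proof (rule subset_antisym)
    show "zariski_submods R M closure_of {\<Union>\<Z>} \<subseteq> \<Z>"
      using \<open>\<Union>\<Z> \<in> \<Z>\<close> by (intro closure_of_minimal assms(1)) simp
    show "\<Z> \<subseteq> zariski_submods R M closure_of {\<Union>\<Z>}"
      unfolding closure_of_zariski_submods_singleton[OF generic] using \<Z>_sub by auto
  qed
qed

lemma (in module) compact_space_zariski_submods: "compact_space (zariski_submods R M)"
  unfolding compact_space_def topspace_zariski_submods
  using compactin_zariski_basic[of "{}"] by (simp add: zariski_basic_empty)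

theorem (in module) spectral_space_zariski_submods: "spectral_space (zariski_submods R M)"
  unfolding spectral_space_def
proof (intro conjI allI impI)
  show "t0_space (zariski_submods R M)" by (rule t0_space_zariski_submods)
  show "compact_space (zariski_submods R M)" by (rule compact_space_zariski_submods)
  fix U V
  assume "openin (zariski_submods R M) U \<and> compactin (zariski_submods R M) U \<and>
    openin (zariski_submods R M) V \<and> compactin (zariski_submods R M) V"
  then show "compactin (zariski_submods R M) (U \<inter> V)"
    by (elim conjE) (rule compactin_Int_zariski_submods)
next
  fix W assume "openin (zariski_submods R M) W"
  define \<C> where
    "\<C> = zariski_basic R M ` {X. finite X \<and> X \<subseteq> carrier M \<and> zariski_basic R M X \<subseteq> W}"
  have "W = \<Union>\<C>"
    unfolding \<C>_def using \<open>openin (zariski_submods R M) W\<close>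
    by (rule openin_zariski_submods_eq_Union_basic)
  moreover have "openin (zariski_submods R M) C \<and> compactin (zariski_submods R M) C" if "C \<in> \<C>" for C
  proof -
    from that obtain X where "finite X" "X \<subseteq> carrier M" "C = zariski_basic R M X"
      unfolding \<C>_def by blast
    then show ?thesis by (simp add: openin_zariski_basic compactin_zariski_basic)
  qed
  ultimately show "\<exists>\<C>. (\<forall>C\<in>\<C>. openin (zariski_submods R M) C \<and> compactin (zariski_submods R M) C)
      \<and> W = \<Union>\<C>"
    by (intro exI[of _ \<C>]) simp
next
  fix \<Z> assume "closedin (zariski_submods R M) \<Z> \<and> irreducible_in (zariski_submods R M) \<Z>"
  then have "closedin (zariski_submods R M) \<Z>" "irreducible_in (zariski_submods R M) \<Z>"
    by simp_all
  note generic = zariski_submods_generic_point[OF this]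
  show "\<exists>!x. x \<in> topspace (zariski_submods R M) \<and> zariski_submods R M closure_of {x} = \<Z>"
  proof (rule ex1I[of _ "\<Union>\<Z>"])
    show "\<Union>\<Z> \<in> topspace (zariski_submods R M) \<and> zariski_submods R M closure_of {\<Union>\<Z>} = \<Z>"
      using generic by (simp add: topspace_zariski_submods)
    fix x assume "x \<in> topspace (zariski_submods R M) \<and> zariski_submods R M closure_of {x} = \<Z>"
    with generic show "x = \<Union>\<Z>"
      using t0_space_zariski_submods[of R M, unfolded t0_space_closure_of_sing, rule_format, of x "\<Union>\<Z>"]
      by (simp add: topspace_zariski_submods)
  qed
qed

section \<open>Density in the constructible topology\<close>

lemma (in module) topspace_constructible_zariski_submods:
  "topspace (constructible_topology (zariski_submods R M)) = submods R M"
proof -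
  let ?T = "zariski_submods R M"
  have "topspace ?T \<in> {U. openin ?T U \<and> compactin ?T U}"
    using compact_space_zariski_submods by (simp add: compact_space_def)
  then have "\<Union>({U. openin ?T U \<and> compactin ?T U} \<union> {topspace ?T - U |U. openin ?T U \<and> compactin ?T U})
      = topspace ?T"
    using openin_subset by blast
  then show ?thesis
    unfolding constructible_topology_def topology_generated_by_topspace
    by (simp add: topspace_zariski_submods)
qed

lemma constructible_openin_zariski_submodsE:
  assumes "openin (constructible_topology (zariski_submods R M)) W" and "N \<in> W"
  obtains X where "finite X" "X \<subseteq> N" "\<forall>P\<in>submods R M. X \<subseteq> P \<and> P \<subseteq> N \<longrightarrow> P \<in> W"
proof -
  let ?T = "zariski_submods R M"
  have "generate_topology_on
      ({U. openin ?T U \<and> compactin ?T U} \<union> {topspace ?T - U |U. openin ?T U \<and> compactin ?T U}) W"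
    using assms(1) unfolding constructible_topology_def openin_topology_generated_by_iff .
  then have "\<exists>X. finite X \<and> X \<subseteq> N \<and> (\<forall>P\<in>submods R M. X \<subseteq> P \<and> P \<subseteq> N \<longrightarrow> P \<in> W)"
    using assms(2)
  proof (induction arbitrary: N rule: generate_topology_on.induct)
    case (Int U V)
    obtain X where X: "finite X" "X \<subseteq> N" "\<forall>P\<in>submods R M. X \<subseteq> P \<and> P \<subseteq> N \<longrightarrow> P \<in> U"
      using Int.IH(1)[of N] Int.prems by blast
    obtain Y where Y: "finite Y" "Y \<subseteq> N" "\<forall>P\<in>submods R M. Y \<subseteq> P \<and> P \<subseteq> N \<longrightarrow> P \<in> V"
      using Int.IH(2)[of N] Int.prems by blast
    show ?case using X Y by (intro exI[of _ "X \<union> Y"]) auto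
  next
    case (UN \<K>)
    then obtain K where K: "K \<in> \<K>" "N \<in> K" by blast
    obtain X where "finite X" "X \<subseteq> N" "\<forall>P\<in>submods R M. X \<subseteq> P \<and> P \<subseteq> N \<longrightarrow> P \<in> K"
      using UN.IH[OF K] by blast
    then show ?case using K(1) by (intro exI[of _ X]) auto
  next
    case (Basis S)
    then consider "openin ?T S" | U where "openin ?T U" "S = topspace ?T - U" by blast
    then show ?case
    proof cases
      case 1
      then obtain X where "finite X" "X \<subseteq> N" "zariski_basic R M X \<subseteq> S"
        using Basis.prems by (rule openin_zariski_submodsE)
      then show ?thesis by (intro exI[of _ X]) (auto simp: zariski_basic_def)
    next
      case 2
      have "N \<in> submods R M" "N \<notin> U"
        using Basis.prems 2(2) by (auto simp: topspace_zariski_submods)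
      have "P \<in> S" if "P \<in> submods R M" "P \<subseteq> N" for P
      proof -
        have "P \<notin> U"
          using openin_zariski_submods_upward[OF 2(1) _ \<open>N \<in> submods R M\<close> that(2)] \<open>N \<notin> U\<close>
          by blast
        then show ?thesis using 2(2) that(1) by (simp add: topspace_zariski_submods)
      qed
      then show ?thesis by (intro exI[of _ "{}"]) auto
    qed
  qed simp
  then show thesis by (elim exE conjE) (rule that)
qed

lemma (in module) constructible_closure_fg_submods:
  "constructible_topology (zariski_submods R M) closure_of fg_submods R M = submods R M"
proof (rule subset_antisym)
  show "constructible_topology (zariski_submods R M) closure_of fg_submods R M \<subseteq> submods R M"
    using closure_of_subset_topspace topspace_constructible_zariski_submods by metis
  show "submods R M \<subseteq> constructible_topology (zariski_submods R M) closure_of fg_submods R M"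
  proof
    fix N assume N: "N \<in> submods R M"
    show "N \<in> constructible_topology (zariski_submods R M) closure_of fg_submods R M"
      unfolding in_closure_of topspace_constructible_zariski_submods
    proof (intro conjI allI impI N)
      fix W assume "N \<in> W \<and> openin (constructible_topology (zariski_submods R M)) W"
      then obtain X where X: "finite X" "X \<subseteq> N"
        and interval: "\<forall>P\<in>submods R M. X \<subseteq> P \<and> P \<subseteq> N \<longrightarrow> P \<in> W"
        by (elim conjE) (rule constructible_openin_zariski_submodsE)
      have "X \<subseteq> carrier M" using X(2) submods_subset_carrier[OF N] by blast
      then have "gen_submod R M X \<in> submods R M" "gen_submod R M X \<subseteq> N"
        using submodule_gen_submod gen_submod_least X(2) N by (simp_all add: submods_def)
      then have "gen_submod R M X \<in> W"
        using interval gen_submod_incl[of X R M] by simp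
      moreover have "gen_submod R M X \<in> fg_submods R M"
        using X(1) \<open>X \<subseteq> carrier M\<close> by (rule gen_submod_in_fg_submods)
      ultimately show "\<exists>P. P \<in> fg_submods R M \<and> P \<in> W" by blast
    qed
  qed
qed

section \<open>The subspace of finitely generated submodules\<close>

lemma irreducible_in_directed:
  assumes "\<Z> \<noteq> {}" and "\<Z> \<subseteq> topspace X"
    and closed_down: "\<And>A P Q. closedin X A \<Longrightarrow> P \<in> A \<Longrightarrow> Q \<in> topspace X \<Longrightarrow> Q \<subseteq> P \<Longrightarrow> Q \<in> A"
    and directed: "\<And>P Q. P \<in> \<Z> \<Longrightarrow> Q \<in> \<Z> \<Longrightarrow> \<exists>S\<in>\<Z>. P \<subseteq> S \<and> Q \<subseteq> S"
  shows "irreducible_in X \<Z>"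
  unfolding irreducible_in_def
proof (intro conjI allI impI assms(1,2))
  fix A B assume AB: "closedin X A \<and> closedin X B \<and> \<Z> \<subseteq> A \<union> B"
  show "\<Z> \<subseteq> A \<or> \<Z> \<subseteq> B"
  proof (rule ccontr)
    assume "\<not> (\<Z> \<subseteq> A \<or> \<Z> \<subseteq> B)"
    then obtain P Q where PQ: "P \<in> \<Z>" "P \<notin> A" "Q \<in> \<Z>" "Q \<notin> B" by blast
    then obtain S where S: "S \<in> \<Z>" "P \<subseteq> S" "Q \<subseteq> S" using directed by blast
    have "P \<in> topspace X" "Q \<in> topspace X" using PQ assms(2) by auto
    consider "S \<in> A" | "S \<in> B" using S(1) AB by blast
    then show False
    proof cases
      case 1
      then have "P \<in> A" using closed_down AB \<open>P \<in> topspace X\<close> S(2) by blast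
      with PQ(2) show False ..
    next
      case 2
      then have "Q \<in> B" using closed_down AB \<open>Q \<in> topspace X\<close> S(3) by blast
      with PQ(4) show False ..
    qed
  qed
qed

lemma closedin_subtopology_zariski_submods_downward:
  assumes "closedin (subtopology (zariski_submods R M) \<S>) A" and "P \<in> A"
    and "Q \<in> topspace (subtopology (zariski_submods R M) \<S>)" and "Q \<subseteq> P"
  shows "Q \<in> A"
proof -
  obtain A' where A': "closedin (zariski_submods R M) A'" "A = A' \<inter> \<S>"
    using assms(1) by (auto simp: closedin_subtopology)
  have "Q \<in> submods R M" "Q \<in> \<S>" using assms(3) by (simp_all add: topspace_zariski_submods)
  then have "Q \<in> A'" using closedin_zariski_submods_downward[OF A'(1) _ _ assms(4)] assms(2) A'(2) by blast
  with \<open>Q \<in> \<S>\<close> show ?thesis by (simp add: A'(2))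
qed

lemma (in module) irreducible_in_fg_submods_below:
  assumes N: "N \<in> submods R M"
  shows "irreducible_in (subtopology (zariski_submods R M) (fg_submods R M)) {P \<in> fg_submods R M. P \<subseteq> N}"
proof (rule irreducible_in_directed)
  have "submodule N R M" using N by (simp add: submods_def)
  have "gen_submod R M {} \<in> fg_submods R M" by (simp add: gen_submod_in_fg_submods)
  moreover have "gen_submod R M {} \<subseteq> N" using \<open>submodule N R M\<close> by (simp add: gen_submod_least)
  ultimately show "{P \<in> fg_submods R M. P \<subseteq> N} \<noteq> {}" by blast
  show "{P \<in> fg_submods R M. P \<subseteq> N} \<subseteq> topspace (subtopology (zariski_submods R M) (fg_submods R M))"
    using fg_submods_subset_submods by (auto simp: topspace_zariski_submods)
  show "Q \<in> A" if "closedin (subtopology (zariski_submods R M) (fg_submods R M)) A" "P \<in> A"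
    "Q \<in> topspace (subtopology (zariski_submods R M) (fg_submods R M))" "Q \<subseteq> P" for A P Q
    using that by (rule closedin_subtopology_zariski_submods_downward)
  fix P Q assume "P \<in> {P \<in> fg_submods R M. P \<subseteq> N}" "Q \<in> {P \<in> fg_submods R M. P \<subseteq> N}"
  then have "P \<in> fg_submods R M" "Q \<in> fg_submods R M" "P \<subseteq> N" "Q \<subseteq> N" by simp_all
  obtain X where X: "finite X" "X \<subseteq> carrier M" "P = gen_submod R M X"
    using \<open>P \<in> fg_submods R M\<close> by (rule fg_submodsE)
  obtain Y where Y: "finite Y" "Y \<subseteq> carrier M" "Q = gen_submod R M Y"
    using \<open>Q \<in> fg_submods R M\<close> by (rule fg_submodsE)
  have "X \<union> Y \<subseteq> N"
    using X(3) Y(3) \<open>P \<subseteq> N\<close> \<open>Q \<subseteq> N\<close> gen_submod_incl[of X R M] gen_submod_incl[of Y R M] by auto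
  then have "gen_submod R M (X \<union> Y) \<in> {P \<in> fg_submods R M. P \<subseteq> N}"
    using X Y \<open>submodule N R M\<close> by (simp add: gen_submod_in_fg_submods gen_submod_least)
  moreover have "P \<subseteq> gen_submod R M (X \<union> Y)" "Q \<subseteq> gen_submod R M (X \<union> Y)"
    unfolding X(3) Y(3) by (simp_all add: gen_submod_mono)
  ultimately show "\<exists>S\<in>{P \<in> fg_submods R M. P \<subseteq> N}. P \<subseteq> S \<and> Q \<subseteq> S" by blast
qed

lemma (in module) spectral_fg_submods_imp_fg:
  assumes spectral: "spectral_space (subtopology (zariski_submods R M) (fg_submods R M))"
    and N: "N \<in> submods R M"
  shows "N \<in> fg_submods R M"
proof -
  let ?F = "subtopology (zariski_submods R M) (fg_submods R M)"
  define \<Z> where "\<Z> = {P \<in> fg_submods R M. P \<subseteq> N}"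
  have "closedin ?F \<Z>"
    unfolding closedin_subtopology
  proof (intro exI conjI)
    show "closedin (zariski_submods R M) (zariski_submods R M closure_of {N})" by simp
    show "\<Z> = zariski_submods R M closure_of {N} \<inter> fg_submods R M"
      unfolding \<Z>_def closure_of_zariski_submods_singleton[OF N]
      using fg_submods_subset_submods by auto
  qed
  moreover have "irreducible_in ?F \<Z>"
    unfolding \<Z>_def using N by (rule irreducible_in_fg_submods_below)
  moreover have "\<forall>\<Z>. closedin ?F \<Z> \<and> irreducible_in ?F \<Z> \<longrightarrow> (\<exists>!G. G \<in> topspace ?F \<and> ?F closure_of {G} = \<Z>)"
    using spectral unfolding spectral_space_def by (elim conjE)
  ultimately obtain G where "G \<in> topspace ?F" and G_closure: "?F closure_of {G} = \<Z>"
    by (metis ex1_implies_ex)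
  then have G: "G \<in> fg_submods R M" "G \<in> submods R M"
    by (simp_all add: topspace_zariski_submods)
  then have "fg_submods R M \<inter> {G} = {G}" by blast
  then have "?F closure_of {G} = {P \<in> fg_submods R M. P \<subseteq> G}"
    unfolding closure_of_subtopology \<open>fg_submods R M \<inter> {G} = {G}\<close> closure_of_zariski_submods_singleton[OF G(2)]
    using fg_submods_subset_submods[of R M] by auto
  with G_closure have below_G: "{P \<in> fg_submods R M. P \<subseteq> G} = \<Z>" by simp
  have "G \<subseteq> N" using G(1) below_G unfolding \<Z>_def by blast
  moreover have "N \<subseteq> G"
  proof
    fix x assume "x \<in> N"
    then have "{x} \<subseteq> carrier M" using submods_subset_carrier[OF N] by blast
    then have "gen_submod R M {x} \<in> \<Z>"
      using \<open>x \<in> N\<close> N unfolding \<Z>_def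
      by (simp add: gen_submod_in_fg_submods gen_submod_least submods_def)
    then have "gen_submod R M {x} \<subseteq> G" unfolding below_G[symmetric] by simp
    then show "x \<in> G" using gen_submod_incl[of "{x}" R M] by (meson insert_subset subset_trans)
  qed
  ultimately show ?thesis using G(1) by simp
qed

theorem proposition5p1:
  fixes R :: "('a, 'c) ring_scheme" and M :: "('a, 'b, 'd) module_scheme"
  assumes "module R M"
  shows "(constructible_topology (zariski_submods R M)) closure_of (fg_submods R M) = submods R M
         \<and> (spectral_space (subtopology (zariski_submods R M) (fg_submods R M)) \<longleftrightarrow> noetherian_module R M)"
proof -
  interpret module R M by (fact assms)
  have "spectral_space (subtopology (zariski_submods R M) (fg_submods R M))
      \<longleftrightarrow> fg_submods R M = submods R M"
  proof
    assume "spectral_space (subtopology (zariski_submods R M) (fg_submods R M))"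
    then show "fg_submods R M = submods R M"
      using spectral_fg_submods_imp_fg fg_submods_subset_submods by blast
  next
    assume "fg_submods R M = submods R M"
    then show "spectral_space (subtopology (zariski_submods R M) (fg_submods R M))"
      using spectral_space_zariski_submods by (simp flip: topspace_zariski_submods)
  qed
  then show ?thesis
    using constructible_closure_fg_submods noetherian_module_iff_fg_submods by simp
qed

end
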